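(* Let $F$ be the uniform distribution on $[0,1]$, $d\ge2$, and let $G$ be a $d$-regular bipartite graph with $n/2$ vertices $L$ on one side and $n/2$ vertices $R$ on the other. Then: (i) the vector with $T_i=1/2$ for $i\in L$ and $T_i=2^{d-1}$ for $i\in R$ lies in $\mathcal{N}_{(1/2)\cdot\mathbf{1}}$ and has revenue $n/8$; (ii) for every uniform price $p'>0$, $\inf_{\mathbf{T}\in\mathcal{N}_{p'\cdot\mathbf{1}}}\mathcal{R}(p'\cdot\mathbf{1},\mathbf{T})\le n/d$; hence the ratio between the best equilibrium revenue and the best worst-case uniform-price revenue can be at least $d/8$; (iii) for the non-uniform price vector with $p_i=1/2$ for $i\in L$ and $p_i=1$ for $i\in R$, the equilibrium set consists of a single equilibrium (up to thresholds above $1$ for buyers in $R$, which never buy), with revenue $n/8$.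
   Context: Public-goods pricing game: $n$ buyers are the vertices of an undirected graph $G=([n],E)$; $N(i)=\{j:(i,j)\in E\}$ (so $i\notin N(i)$). Values i.i.d. with cumulative distribution function $F$; for the uniform distribution $F(x)=\min\{1,x\}$ for $x\ge0$, $F(\infty)=1$. An equilibrium for price vector $\mathbf{p}$ is $\mathbf{T}\in[0,\infty]^n$ (buyer $i$ purchases iff $v_i\ge T_i$) with $T_i=p_i/\prod_{j\in N(i)}F(T_j)$ for all $i$; $\mathcal{N}_{\mathbf{p}}$ is the set of equilibria; $\mathcal{R}(\mathbf{p},\mathbf{T})=\sum_ip_i(1-F(T_i))$; $p\cdot\mathbf{1}$ is the uniform price vector. *)

theory Defs
  imports "HOL-Analysis.Analysis"
begin

text \<open>Buyers are the vertices 0..<n; the graph is a relation E restricted to them.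
Thresholds live in [0,\<infinity>] = ennreal.\<close>

definition nbrs :: "nat \<Rightarrow> (nat \<Rightarrow> nat \<Rightarrow> bool) \<Rightarrow> nat \<Rightarrow> nat set" where
  "nbrs n E i = {j. j < n \<and> E i j}"

definition F_unif :: "ennreal \<Rightarrow> real" where
  "F_unif x = enn2real (min 1 x)"

text \<open>Equilibria for price vector p: T_i = p_i / prod_{j in N(i)} F(T_j) for all buyers i
(in ennreal, p/0 = \<infinity> for p > 0).\<close>
definition equilibria ::
  "nat \<Rightarrow> (nat \<Rightarrow> nat \<Rightarrow> bool) \<Rightarrow> (ennreal \<Rightarrow> real) \<Rightarrow> (nat \<Rightarrow> real) \<Rightarrow> (nat \<Rightarrow> ennreal) set" where
  "equilibria n E F p = {T. \<forall>i<n. T i = ennreal (p i) / ennreal (\<Prod>j\<in>nbrs n E i. F (T j))}"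

definition revenue :: "nat \<Rightarrow> (ennreal \<Rightarrow> real) \<Rightarrow> (nat \<Rightarrow> real) \<Rightarrow> (nat \<Rightarrow> ennreal) \<Rightarrow> real" where
  "revenue n F p T = (\<Sum>i<n. p i * (1 - F (T i)))"

end

theory Submission
  imports Defs
begin

text \<open>
  On a regular bipartite graph a threshold profile that is constant on each side is an
  equilibrium as soon as two scalar equations hold, so equilibria can be written down
  explicitly.  At the uniform price 1/2 the side L buys with probability 1/2 while R is priced
  out (threshold 2^(d-1)), giving revenue n/8.  Every uniform price p admits the symmetric
  equilibrium with threshold t = p^(1/(d+1)) (or t = p if p \<ge> 1); its revenue per buyer is
  t^(d+1) (1 - t) \<le> t^d (1 - t) \<le> 1/(d+1), so the worst equilibrium earns at most n/d.  With
  price 1 on R, every threshold on R is at least 1, so each buyer of L faces a saturated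
  neighbourhood and its threshold is forced to be its price 1/2.
\<close>

lemma F_unif_ennreal: "0 \<le> x \<Longrightarrow> F_unif (ennreal x) = min 1 x"
  unfolding F_unif_def
  by (metis ennreal_1 min_ennreal zero_le_one enn2real_ennreal min.bounded_iff)

lemma F_unif_eq_1: "1 \<le> x \<Longrightarrow> F_unif x = 1"
  unfolding F_unif_def by (simp add: min_def)

lemma F_unif_nonneg: "0 \<le> F_unif x"
  unfolding F_unif_def by simp

lemma F_unif_le_1: "F_unif x \<le> 1"
  unfolding F_unif_def by (auto intro: enn2real_leI)

lemma ennreal_half_eq: "(1/2::ennreal) = ennreal (1/2)"
  using divide_ennreal[of 1 2] by simp

lemma F_unif_half: "F_unif (1/2) = 1/2"
  using F_unif_ennreal[of "1/2"] by (simp add: ennreal_half_eq)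

lemma F_unif_two_power: "F_unif (2 ^ k) = 1"
  by (intro F_unif_eq_1) simp

lemma divide_F_unif_half_power:
  "0 \<le> c \<Longrightarrow> ennreal c / ennreal (F_unif (1/2) ^ d) = ennreal (c * 2 ^ d)"
  by (subst divide_ennreal) (auto simp: F_unif_half power_divide)

lemma ennreal_le_divide_le_one:
  assumes "0 \<le> a" "0 \<le> x" "x \<le> 1"
  shows "ennreal a \<le> ennreal a / ennreal x"
proof (cases "x = 0")
  case False
  then have "ennreal a / ennreal x = ennreal (a / x)"
    using assms by (intro divide_ennreal) auto
  moreover have "a \<le> a / x"
    using assms False by (simp add: le_divide_eq mult_left_le)
  ultimately show ?thesis by (auto intro: ennreal_leI)
qed simp

lemma power_mult_one_minus_le:
  fixes t :: real
  assumes "0 \<le> t" "t \<le> 1"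
  shows "t ^ d * (1 - t) \<le> 1 / (real d + 1)"
proof -
  have "t ^ d * (1 - t) * (real d + 1) = (1 - t) * (\<Sum>k<Suc d. t ^ d)" by simp
  also have "\<dots> \<le> (1 - t) * (\<Sum>k<Suc d. t ^ k)"
    using assms by (intro mult_left_mono sum_mono) (auto simp: power_decreasing)
  also have "\<dots> = 1 - t ^ Suc d" by (rule one_diff_power_eq[symmetric])
  also have "\<dots> \<le> 1" using assms by simp
  finally show ?thesis by (simp add: pos_le_divide_eq add_pos_nonneg)
qed

lemma prod_nbrs_const:
  assumes "card (nbrs n E i) = d" "\<And>j. j \<in> nbrs n E i \<Longrightarrow> f j = c"
  shows "(\<Prod>j\<in>nbrs n E i. f j) = c ^ d"
  using assms by simp

lemma mem_equilibria_iff: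
  "T \<in> equilibria n E F p \<longleftrightarrow>
     (\<forall>i<n. T i = ennreal (p i) / ennreal (\<Prod>j\<in>nbrs n E i. F (T j)))"
  unfolding equilibria_def by simp

lemma price_le_equilibrium_threshold:
  assumes "T \<in> equilibria n E F_unif p" "i < n" "0 \<le> p i"
  shows "ennreal (p i) \<le> T i"
proof -
  let ?P = "\<Prod>j\<in>nbrs n E i. F_unif (T j)"
  have "0 \<le> ?P" "?P \<le> 1"
    by (auto intro: prod_nonneg prod_le_1 simp: F_unif_nonneg F_unif_le_1)
  with assms show ?thesis
    by (simp add: mem_equilibria_iff ennreal_le_divide_le_one)
qed

lemma revenue_const: "revenue n F (\<lambda>_. p) (\<lambda>_. t) = real n * p * (1 - F t)"
  unfolding revenue_def by simp

lemma const_mem_equilibria: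
  assumes reg: "\<And>i. i < n \<Longrightarrow> card (nbrs n E i) = d"
    and "0 \<le> t" "0 < F_unif (ennreal t)" "p = t * F_unif (ennreal t) ^ d"
  shows "(\<lambda>_. ennreal t) \<in> equilibria n E F_unif (\<lambda>_. p)"
  unfolding mem_equilibria_iff
proof (intro allI impI)
  fix i assume "i < n"
  then have "(\<Prod>j\<in>nbrs n E i. F_unif (ennreal t)) = F_unif (ennreal t) ^ d"
    using reg by simp
  moreover have "ennreal p / ennreal (F_unif (ennreal t) ^ d) = ennreal t"
    using assms(2-4) by (subst divide_ennreal) auto
  ultimately show "ennreal t = ennreal p / ennreal (\<Prod>j\<in>nbrs n E i. F_unif (ennreal t))"
    by simp
qed

lemma uniform_price_equilibrium_revenue_le:
  assumes reg: "\<And>i. i < n \<Longrightarrow> card (nbrs n E i) = d"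
    and "0 < d" "0 < p"
  shows "\<exists>T\<in>equilibria n E F_unif (\<lambda>_. p). revenue n F_unif (\<lambda>_. p) T \<le> real n / real d"
proof (cases "1 \<le> p")
  case True
  then have "F_unif (ennreal p) = 1" by (intro F_unif_eq_1) simp
  then have "(\<lambda>_. ennreal p) \<in> equilibria n E F_unif (\<lambda>_. p)"
    and "revenue n F_unif (\<lambda>_. p) (\<lambda>_. ennreal p) = 0"
    using \<open>0 < p\<close> by (auto intro: const_mem_equilibria[OF reg] simp: revenue_const)
  then show ?thesis by force
next
  case False
  \<comment> \<open>the symmetric equilibrium at threshold t solves p = t^(d+1)\<close>
  define t where "t = root (Suc d) p"
  have "0 < t" "t < 1"
    using \<open>0 < p\<close> False by (auto simp: t_def real_root_lt_1_iff)
  have "p = t * t ^ d"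
    using \<open>0 < p\<close> by (metis t_def power_Suc real_root_pow_pos zero_less_Suc)
  have Ft: "F_unif (ennreal t) = t"
    using \<open>0 < t\<close> \<open>t < 1\<close> by (simp add: F_unif_ennreal)
  have eq: "(\<lambda>_. ennreal t) \<in> equilibria n E F_unif (\<lambda>_. p)"
    using \<open>0 < t\<close> \<open>p = t * t ^ d\<close> by (intro const_mem_equilibria[OF reg]) (auto simp: Ft)
  have "p * (1 - t) \<le> t ^ d * (1 - t)"
    using \<open>0 < t\<close> \<open>t < 1\<close> \<open>p = t * t ^ d\<close> by (simp add: mult_left_le_one_le)
  also have "\<dots> \<le> 1 / (real d + 1)"
    using \<open>0 < t\<close> \<open>t < 1\<close> by (intro power_mult_one_minus_le) auto
  also have "\<dots> \<le> 1 / real d"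
    using \<open>0 < d\<close> by (simp add: frac_le)
  finally have "revenue n F_unif (\<lambda>_. p) (\<lambda>_. ennreal t) \<le> real n / real d"
    by (simp add: revenue_const Ft mult.assoc divide_inverse mult_left_mono)
  with eq show ?thesis by blast
qed

lemma uniform_price_worst_revenue_le:
  assumes "\<And>i. i < n \<Longrightarrow> card (nbrs n E i) = d" "0 < d" "0 < p"
  shows "(INF T\<in>equilibria n E F_unif (\<lambda>_. p). ereal (revenue n F_unif (\<lambda>_. p) T))
           \<le> ereal (real n / real d)"
proof -
  obtain T where "T \<in> equilibria n E F_unif (\<lambda>_. p)" "revenue n F_unif (\<lambda>_. p) T \<le> real n / real d"
    using uniform_price_equilibrium_revenue_le[OF assms] by blast
  then show ?thesis by (intro INF_lower2) auto
qed

locale regular_bipartite =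
  fixes n d :: nat and E :: "nat \<Rightarrow> nat \<Rightarrow> bool" and L R :: "nat set"
  assumes parts: "L \<union> R = {..<n}" "L \<inter> R = {}" "2 * card L = n" "2 * card R = n"
    and bip: "\<And>i j. i < n \<Longrightarrow> j < n \<Longrightarrow> E i j \<Longrightarrow> (i \<in> L \<longleftrightarrow> j \<in> R)"
    and reg: "\<And>i. i < n \<Longrightarrow> card (nbrs n E i) = d"
begin

lemma L_less: "i \<in> L \<Longrightarrow> i < n" and R_less: "i \<in> R \<Longrightarrow> i < n"
  using parts by auto

lemma R_not_L: "i \<in> R \<Longrightarrow> i \<notin> L"
  using parts by auto

lemma nbrs_L: "i \<in> L \<Longrightarrow> nbrs n E i \<subseteq> R"
  using parts bip by (auto simp: nbrs_def)

lemma nbrs_R: "i \<in> R \<Longrightarrow> nbrs n E i \<subseteq> L"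
proof
  fix j assume "i \<in> R" and "j \<in> nbrs n E i"
  then have "i < n" "i \<notin> L" "j < n" "E i j"
    using parts by (auto simp: nbrs_def)
  then have "j \<notin> R" using bip by blast
  with \<open>j < n\<close> show "j \<in> L" using parts by auto
qed

lemma L_or_R: "i < n \<Longrightarrow> i \<in> L \<or> i \<in> R"
  using parts by auto

lemma revenue_two_sided:
  assumes "\<And>i. i \<in> L \<Longrightarrow> p i * (1 - F (T i)) = a"
    and "\<And>i. i \<in> R \<Longrightarrow> p i * (1 - F (T i)) = b"
  shows "revenue n F p T = real n / 2 * (a + b)"
proof -
  have "finite L" "finite R"
    using parts by (metis finite_Un finite_lessThan)+
  then have "revenue n F p T = (\<Sum>i\<in>L. p i * (1 - F (T i))) + (\<Sum>i\<in>R. p i * (1 - F (T i)))"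
    unfolding revenue_def parts(1)[symmetric] using parts(2) by (rule sum.union_disjoint)
  also have "\<dots> = real (card L) * a + real (card R) * b"
    using assms by simp
  also have "\<dots> = real n / 2 * (a + b)"
    using parts(3,4) by (auto simp flip: of_nat_mult simp: algebra_simps)
  finally show ?thesis .
qed

lemma two_sided_mem_equilibria:
  assumes pL: "\<And>i. i \<in> L \<Longrightarrow> p i = pL" and pR: "\<And>i. i \<in> R \<Longrightarrow> p i = pR"
    and tL: "tL = ennreal pL / ennreal (F_unif tR ^ d)"
    and tR: "tR = ennreal pR / ennreal (F_unif tL ^ d)"
  shows "(\<lambda>i. if i \<in> L then tL else tR) \<in> equilibria n E F_unif p"
  unfolding mem_equilibria_iff
proof (intro allI impI)
  fix i assume "i < n"
  show "(if i \<in> L then tL else tR) =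
      ennreal (p i) / ennreal (\<Prod>j\<in>nbrs n E i. F_unif (if j \<in> L then tL else tR))"
  proof (cases "i \<in> L")
    case True
    then have "(\<Prod>j\<in>nbrs n E i. F_unif (if j \<in> L then tL else tR)) = F_unif tR ^ d"
      using nbrs_L R_not_L reg \<open>i < n\<close> by (intro prod_nbrs_const) auto
    with True show ?thesis using pL tL by simp
  next
    case False
    then have "i \<in> R" using L_or_R \<open>i < n\<close> by blast
    then have "(\<Prod>j\<in>nbrs n E i. F_unif (if j \<in> L then tL else tR)) = F_unif tL ^ d"
      using nbrs_R reg \<open>i < n\<close> by (intro prod_nbrs_const) auto
    with False \<open>i \<in> R\<close> show ?thesis using pR tR by simp
  qed
qed

lemma equilibria_R_price_one:
  assumes T: "T \<in> equilibria n E F_unif p"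
    and pR: "\<And>i. i \<in> R \<Longrightarrow> p i = 1"
  shows "\<And>i. i \<in> R \<Longrightarrow> 1 \<le> T i" and "\<And>i. i \<in> L \<Longrightarrow> T i = ennreal (p i)"
proof -
  show R_ge: "1 \<le> T i" if "i \<in> R" for i
    using price_le_equilibrium_threshold[OF T R_less] pR that by fastforce
  fix i assume "i \<in> L"
  \<comment> \<open>all neighbours of i lie in R, where the CDF is already saturated\<close>
  then have "(\<Prod>j\<in>nbrs n E i. F_unif (T j)) = 1"
    using nbrs_L R_ge by (intro prod_nbrs_const[OF reg[OF L_less], of _ _ 1, simplified])
      (auto intro: F_unif_eq_1)
  then show "T i = ennreal (p i)"
    using T L_less[OF \<open>i \<in> L\<close>] by (simp add: mem_equilibria_iff divide_ennreal_def)
qed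

lemma half_price_equilibrium:
  assumes "0 < d"
  shows "(\<lambda>i. if i \<in> L then 1/2 else 2 ^ (d - 1)) \<in> equilibria n E F_unif (\<lambda>_. 1/2)"
    and "revenue n F_unif (\<lambda>_. 1/2) (\<lambda>i. if i \<in> L then 1/2 else 2 ^ (d - 1)) = real n / 8"
proof (rule two_sided_mem_equilibria[where pL = "1/2" and pR = "1/2"])
  have "(1/2) * 2 ^ d = (2::real) ^ (d - 1)"
    using assms by (cases d) auto
  then show "2 ^ (d - 1) = ennreal (1/2) / ennreal (F_unif (1/2) ^ d)"
    by (simp only: divide_F_unif_half_power) (simp flip: ennreal_power)
  show "revenue n F_unif (\<lambda>_. 1/2) (\<lambda>i. if i \<in> L then 1/2 else 2 ^ (d - 1)) = real n / 8"
    by (subst revenue_two_sided[where a = "1/4" and b = 0])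
      (auto simp: F_unif_half F_unif_two_power R_not_L)
qed (simp_all add: F_unif_two_power ennreal_half_eq divide_ennreal_def)

lemma split_price_equilibria:
  defines "p \<equiv> \<lambda>i. if i \<in> L then 1/2 else 1"
  shows "(\<lambda>i. if i \<in> L then 1/2 else 2 ^ d) \<in> equilibria n E F_unif p"
    and "T \<in> equilibria n E F_unif p \<Longrightarrow>
      (\<forall>i\<in>L. T i = 1/2) \<and> (\<forall>i\<in>R. 1 \<le> T i) \<and> revenue n F_unif p T = real n / 8"
proof (rule two_sided_mem_equilibria[where pL = "1/2" and pR = 1])
  show "2 ^ d = ennreal 1 / ennreal (F_unif (1/2) ^ d)"
    by (simp only: divide_F_unif_half_power) (simp flip: ennreal_power)
next
  assume T: "T \<in> equilibria n E F_unif p"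
  have pR: "p i = 1" if "i \<in> R" for i
    using that by (simp add: p_def R_not_L)
  have TR: "1 \<le> T i" if "i \<in> R" for i
    using equilibria_R_price_one(1)[OF T pR that] .
  have TL: "T i = 1/2" if "i \<in> L" for i
    using equilibria_R_price_one(2)[OF T pR that] that by (simp add: p_def ennreal_half_eq)
  have "revenue n F_unif p T = real n / 8"
    by (subst revenue_two_sided[where a = "1/4" and b = 0])
      (auto simp: p_def TL TR F_unif_half F_unif_eq_1 R_not_L)
  with TL TR show "(\<forall>i\<in>L. T i = 1/2) \<and> (\<forall>i\<in>R. 1 \<le> T i) \<and> revenue n F_unif p T = real n / 8"
    by blast
qed (simp_all add: p_def F_unif_two_power ennreal_half_eq divide_ennreal_def R_not_L)

end

theorem mainTheorem11:
  fixes n d :: nat and E :: "nat \<Rightarrow> nat \<Rightarrow> bool" and L R :: "nat set"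
  assumes d2: "d \<ge> 2"
    and sym: "\<And>i j. E i j \<Longrightarrow> E j i"
    and irrefl: "\<And>i. \<not> E i i"
    and parts: "L \<union> R = {..<n}" "L \<inter> R = {}" "2 * card L = n" "2 * card R = n"
    and bip: "\<And>i j. i < n \<Longrightarrow> j < n \<Longrightarrow> E i j \<Longrightarrow> (i \<in> L \<longleftrightarrow> j \<in> R)"
    and reg: "\<And>i. i < n \<Longrightarrow> card (nbrs n E i) = d"
  shows
    "(\<lambda>i. if i \<in> L then 1/2 else 2 ^ (d - 1)) \<in> equilibria n E F_unif (\<lambda>_. 1/2)
     \<and> revenue n F_unif (\<lambda>_. 1/2) (\<lambda>i. if i \<in> L then 1/2 else 2 ^ (d - 1)) = real n / 8
     \<and> (\<forall>p'::real. p' > 0 \<longrightarrow>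
          (INF T\<in>equilibria n E F_unif (\<lambda>_. p'). ereal (revenue n F_unif (\<lambda>_. p') T))
            \<le> ereal (real n / real d))
     \<and> (let p = (\<lambda>i. if i \<in> L then 1/2 else 1) in
          equilibria n E F_unif p \<noteq> {}
          \<and> (\<forall>T\<in>equilibria n E F_unif p.
               (\<forall>i\<in>L. T i = 1/2) \<and> (\<forall>i\<in>R. T i \<ge> 1)
               \<and> revenue n F_unif p T = real n / 8))"
proof -
  interpret regular_bipartite n d E L R
    using parts bip reg by unfold_locales
  have "0 < d" using d2 by simp
  have split_price: "let p = (\<lambda>i. if i \<in> L then 1/2 else 1) in
      equilibria n E F_unif p \<noteq> {}
      \<and> (\<forall>T\<in>equilibria n E F_unif p.
           (\<forall>i\<in>L. T i = 1/2) \<and> (\<forall>i\<in>R. T i \<ge> 1) \<and> revenue n F_unif p T = real n / 8)"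
    unfolding Let_def using split_price_equilibria by (intro conjI ballI) blast+
  show ?thesis
    using half_price_equilibrium[OF \<open>0 < d\<close>] split_price
    by (intro conjI allI impI uniform_price_worst_revenue_le[OF reg \<open>0 < d\<close>])
qed

end
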